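(* Let $I\subset S=K[x_1,\dots,x_t]$ be an $\mathfrak m$-primary monomial ideal, where $\mathfrak m=\langle x_1,\dots,x_t\rangle$. Let $\mathcal M$ be the set of all $t\times t$ matrices $A=(a_{ij})$ whose rows are the exponent vectors of $t$ elements chosen from $\mathscr G(I)$ and which satisfy: (1) $a_{ii}>a_{li}$ for all $l\ne i$ and all $i=1,\dots,t$; (2) $(a_{11}-1,\dots,a_{tt}-1)\notin E(I)$. Then $$v(I)=\min\{\operatorname{tr}(A)-t : A\in\mathcal M\}.$$
   Context: $K$ is a field and $S$ is standard graded. For a proper graded ideal $I$, the $v$-number is $v(I)=\min\{k\ge 0 : \exists f\in S_k,\ \mathcal P\in\operatorname{Ass}(S/I) \text{ with } (I:f)=\mathcal P\}$. For a monomial ideal $I$, $\mathscr G(I)$ is its unique minimal set of monomial generators, and $E(I)\subseteq\mathbb Z_{\ge0}^t$ is the set of exponent vectors of the monomials lying in $I$ (the monomial $x_1^{a_1}\cdots x_t^{a_t}$ has exponent vector $(a_1,\dots,a_t)$). $\operatorname{tr}$ denotes the trace. *)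

theory Defs
  imports "HOL-Library.Poly_Mapping" "HOL-Library.Function_Algebras"
begin

text \<open>Polynomial ring S = K[x_v : v in 'v] over a field K, where the finite type 'v
  indexes the variables (t = CARD('v)).\<close>

type_synonym ('v, 'k) mpoly = "('v \<Rightarrow> nat) \<Rightarrow>\<^sub>0 'k"

definition monom :: "('v \<Rightarrow> nat) \<Rightarrow> ('v, 'k::comm_ring_1) mpoly" where
  "monom a = Poly_Mapping.single a 1"

definition var :: "'v \<Rightarrow> ('v, 'k::comm_ring_1) mpoly" where
  "var v = monom (\<lambda>w. if w = v then 1 else 0)"

definition tdeg :: "('v::finite \<Rightarrow> nat) \<Rightarrow> nat" where
  "tdeg a = (\<Sum>v\<in>UNIV. a v)"

definition homogeneous :: "nat \<Rightarrow> ('v::finite, 'k::comm_ring_1) mpoly \<Rightarrow> bool" where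
  "homogeneous k f \<longleftrightarrow> (\<forall>a\<in>Poly_Mapping.keys f. tdeg a = k)"

definition is_ideal :: "('a::comm_ring_1) set \<Rightarrow> bool" where
  "is_ideal I \<longleftrightarrow> 0 \<in> I \<and> (\<forall>f\<in>I. \<forall>g\<in>I. f + g \<in> I) \<and> (\<forall>f\<in>I. \<forall>g. g * f \<in> I)"

definition ideal_span :: "('a::comm_ring_1) set \<Rightarrow> 'a set" where
  "ideal_span X = \<Inter>{J. is_ideal J \<and> X \<subseteq> J}"

definition is_prime_ideal :: "('a::comm_ring_1) set \<Rightarrow> bool" where
  "is_prime_ideal P \<longleftrightarrow> is_ideal P \<and> 1 \<notin> P \<and> (\<forall>f g. f * g \<in> P \<longrightarrow> f \<in> P \<or> g \<in> P)"

definition is_primary_ideal :: "('a::comm_ring_1) set \<Rightarrow> bool" where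
  "is_primary_ideal Q \<longleftrightarrow> is_ideal Q \<and> 1 \<notin> Q \<and>
     (\<forall>f g. f * g \<in> Q \<longrightarrow> f \<in> Q \<or> (\<exists>n. g ^ n \<in> Q))"

definition radical :: "('a::comm_ring_1) set \<Rightarrow> 'a set" where
  "radical I = {f. \<exists>n. f ^ n \<in> I}"

definition colon :: "('a::comm_ring_1) set \<Rightarrow> 'a \<Rightarrow> 'a set" where
  "colon I f = {g. g * f \<in> I}"

definition Ass :: "('a::comm_ring_1) set \<Rightarrow> 'a set set" where
  "Ass I = {P. is_prime_ideal P \<and> (\<exists>f. colon I f = P)}"

definition max_ideal :: "('v, 'k::comm_ring_1) mpoly set" where
  "max_ideal = ideal_span (range var)"

definition m_primary :: "('v, 'k::comm_ring_1) mpoly set \<Rightarrow> bool" where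
  "m_primary I \<longleftrightarrow> is_primary_ideal I \<and> radical I = max_ideal"

definition expset :: "('v, 'k::comm_ring_1) mpoly set \<Rightarrow> ('v \<Rightarrow> nat) set" where
  "expset I = {a. monom a \<in> I}"

definition monomial_ideal :: "('v, 'k::comm_ring_1) mpoly set \<Rightarrow> bool" where
  "monomial_ideal I \<longleftrightarrow> is_ideal I \<and> I = ideal_span (monom ` expset I)"

definition mingens :: "('v, 'k::comm_ring_1) mpoly set \<Rightarrow> ('v \<Rightarrow> nat) set" where
  "mingens I = {a \<in> expset I. \<forall>b\<in>expset I. (\<forall>v. b v \<le> a v) \<longrightarrow> b = a}"

definition v_number :: "('v::finite, 'k::comm_ring_1) mpoly set \<Rightarrow> nat" where
  "v_number I = (LEAST k. \<exists>f P. homogeneous k f \<and> P \<in> Ass I \<and> colon I f = P)"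

text \<open>The set M of matrices: a t x t matrix is a map from row index to row; row i
  is the exponent vector A i of an element of G(I), entry a_ij = A i j.\<close>
definition matset :: "('v, 'k::comm_ring_1) mpoly set \<Rightarrow> ('v \<Rightarrow> 'v \<Rightarrow> nat) set" where
  "matset I = {A. (\<forall>i. A i \<in> mingens I)
                 \<and> (\<forall>i l. l \<noteq> i \<longrightarrow> A i i > A l i)
                 \<and> (\<lambda>i. A i i - 1) \<notin> expset I}"

definition trace :: "('v::finite \<Rightarrow> 'v \<Rightarrow> nat) \<Rightarrow> nat" where
  "trace A = (\<Sum>i\<in>UNIV. A i i)"

end

theory Submission
  imports Defs
begin

text \<open>For a monomial ideal I, the colon ideal (I : x^b) is the maximal ideal exactly when
  x^b is not in I but x_v x^b is in I for every variable x_v; call such b a socle exponent.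
  Conversely, if (I : f) is prime for a homogeneous f of degree k, it contains a power of every
  variable (I being m-primary), hence all variables, and any exponent of f outside E(I) is a
  socle exponent of degree k. So v(I) is the least degree of a socle exponent.
  A socle exponent b yields a matrix in M of trace |b| + t: in row v choose a minimal generator
  dividing x_v x^b; since x^b is not in I this forces a_vv = b_v + 1 and a_lv <= b_v.
  Conversely, the diagonal of any A in M, lowered by one, is a socle exponent.\<close>

lemma is_ideal_ideal_span: "is_ideal (ideal_span X)"
  unfolding ideal_span_def is_ideal_def by auto

lemma ideal_span_superset: "X \<subseteq> ideal_span X"
  unfolding ideal_span_def by auto

lemma ideal_span_minimal: "is_ideal J \<Longrightarrow> X \<subseteq> J \<Longrightarrow> ideal_span X \<subseteq> J"
  unfolding ideal_span_def by auto

lemma ideal_mult_mem: "is_ideal J \<Longrightarrow> f \<in> J \<Longrightarrow> g * f \<in> J"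
  unfolding is_ideal_def by auto

lemma ideal_sum_mem:
  assumes "is_ideal J" "\<And>a. a \<in> A \<Longrightarrow> f a \<in> J"
  shows "sum f A \<in> J"
proof (cases "finite A")
  case True
  then show ?thesis
    using assms(2) by (induction A rule: finite_induct) (use assms(1) in \<open>auto simp: is_ideal_def\<close>)
qed (use assms(1) in \<open>simp add: is_ideal_def\<close>)

lemma prime_ideal_power_mem: "is_prime_ideal P \<Longrightarrow> x ^ n \<in> P \<Longrightarrow> x \<in> P"
  by (induction n) (auto simp: is_prime_ideal_def)

definition supported_above :: "('v \<Rightarrow> nat) set \<Rightarrow> ('v, 'k::comm_ring_1) mpoly set" where
  "supported_above E = {f. \<forall>a\<in>Poly_Mapping.keys f. \<exists>e\<in>E. e \<le> a}"

lemma is_ideal_supported_above: "is_ideal (supported_above E :: ('v, 'k::comm_ring_1) mpoly set)"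
  unfolding is_ideal_def
proof (intro conjI ballI allI)
  fix f g :: "('v, 'k) mpoly"
  assume "f \<in> supported_above E" "g \<in> supported_above E"
  then show "f + g \<in> supported_above E"
    using keys_add[of f g] unfolding supported_above_def by blast
next
  fix f g :: "('v, 'k) mpoly"
  assume f: "f \<in> supported_above E"
  show "g * f \<in> supported_above E"
    unfolding supported_above_def
  proof (intro CollectI ballI)
    fix c assume "c \<in> Poly_Mapping.keys (g * f)"
    then obtain u w where c: "c = u + w" and w: "w \<in> Poly_Mapping.keys f"
      using keys_mult by blast
    from f w obtain e where "e \<in> E" "e \<le> w"
      unfolding supported_above_def by blast
    moreover have "w \<le> c" using c by (simp add: le_fun_def)
    ultimately show "\<exists>e\<in>E. e \<le> c" by (meson order_trans)
  qed
qed (simp add: supported_above_def)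

lemma poly_mapping_sum_single:
  "f = (\<Sum>a\<in>Poly_Mapping.keys f. Poly_Mapping.single a (Poly_Mapping.lookup f a))"
  by (rule poly_mapping_eqI) (simp add: lookup_sum lookup_single when_def in_keys_iff)

lemma monom_add: "monom (a + b) = (monom a * monom b :: ('v, 'k::comm_ring_1) mpoly)"
  by (simp add: monom_def mult_single)

lemma monom_0: "monom 0 = (1 :: ('v, 'k::comm_ring_1) mpoly)"
  by (simp add: monom_def)

lemma single_eq_mult_monom:
  assumes "(e::'v \<Rightarrow> nat) \<le> a"
  shows "Poly_Mapping.single a (c::'k::comm_ring_1) = Poly_Mapping.single (a - e) c * monom e"
proof -
  from assms have "a - e + e = a" by (auto simp: le_fun_def fun_eq_iff)
  then show ?thesis by (simp add: monom_def mult_single)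
qed

lemma monom_mem_supported_above: "e \<in> E \<Longrightarrow> e \<le> a \<Longrightarrow> monom a \<in> supported_above E"
  unfolding supported_above_def monom_def by (simp add: keys_single) blast

lemma ideal_span_monom_image: "ideal_span (monom ` E) = (supported_above E :: ('v, 'k::comm_ring_1) mpoly set)"
proof
  show "ideal_span (monom ` E) \<subseteq> (supported_above E :: ('v, 'k) mpoly set)"
    by (intro ideal_span_minimal is_ideal_supported_above) (use monom_mem_supported_above order_refl in blast)
next
  show "supported_above E \<subseteq> (ideal_span (monom ` E) :: ('v, 'k) mpoly set)"
  proof
    fix f :: "('v, 'k) mpoly" assume f: "f \<in> supported_above E"
    have "Poly_Mapping.single a (Poly_Mapping.lookup f a) \<in> ideal_span (monom ` E)"
      if a: "a \<in> Poly_Mapping.keys f" for a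
    proof -
      obtain e where e: "e \<in> E" "e \<le> a" using f a unfolding supported_above_def by blast
      then have "monom e \<in> (ideal_span (monom ` E) :: ('v, 'k) mpoly set)"
        using ideal_span_superset by blast
      then have "Poly_Mapping.single (a - e) (Poly_Mapping.lookup f a) * monom e \<in> ideal_span (monom ` E)"
        by (rule ideal_mult_mem[OF is_ideal_ideal_span])
      then show ?thesis by (simp only: single_eq_mult_monom[OF e(2)])
    qed
    then have "(\<Sum>a\<in>Poly_Mapping.keys f. Poly_Mapping.single a (Poly_Mapping.lookup f a)) \<in> ideal_span (monom ` E)"
      by (rule ideal_sum_mem[OF is_ideal_ideal_span])
    then show "f \<in> ideal_span (monom ` E)"
      by (simp only: poly_mapping_sum_single[symmetric])
  qed
qed

lemma keys_monom_mult:
  "Poly_Mapping.keys (monom b * g) = (+) b ` Poly_Mapping.keys (g :: ('v, 'k::comm_ring_1) mpoly)"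
proof
  show "Poly_Mapping.keys (monom b * g) \<subseteq> (+) b ` Poly_Mapping.keys g"
    using keys_mult[of "monom b" g] by (auto simp: monom_def)
  have "Poly_Mapping.lookup (monom b * g) (b + a) = Poly_Mapping.lookup g a" for a
    by (simp add: lookup_mult monom_def lookup_single when_mult)
  then show "(+) b ` Poly_Mapping.keys g \<subseteq> Poly_Mapping.keys (monom b * g)"
    by (auto simp: in_keys_iff)
qed

lemma monomial_ideal_eq_supported_above: "monomial_ideal I \<Longrightarrow> I = supported_above (expset I)"
  unfolding monomial_ideal_def by (metis ideal_span_monom_image)

lemma expset_upward_closed:
  assumes "monomial_ideal I" "a \<in> expset I" "a \<le> b"
  shows "b \<in> expset I"
proof -
  have "monom b \<in> supported_above (expset I)"
    using assms(2,3) by (rule monom_mem_supported_above)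
  then have "monom b \<in> I"
    using monomial_ideal_eq_supported_above[OF assms(1)] by blast
  then show ?thesis by (simp add: expset_def)
qed

lemma monomial_ideal_mem_iff:
  assumes "monomial_ideal I"
  shows "f \<in> I \<longleftrightarrow> Poly_Mapping.keys f \<subseteq> expset I"
proof -
  have "f \<in> I \<longleftrightarrow> (\<forall>a\<in>Poly_Mapping.keys f. \<exists>e\<in>expset I. e \<le> a)"
    using monomial_ideal_eq_supported_above[OF assms, THEN eqset_imp_iff, of f]
    by (simp add: supported_above_def)
  also have "\<dots> \<longleftrightarrow> Poly_Mapping.keys f \<subseteq> expset I"
    using expset_upward_closed[OF assms] by (blast intro: order_refl)
  finally show ?thesis .
qed

lemma var_eq_monom: "var v = monom (0(v := 1))"
  unfolding var_def by (rule arg_cong[where f = monom]) (simp add: fun_eq_iff)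

lemma var_power: "(var v :: ('v, 'k::comm_ring_1) mpoly) ^ n = monom (0(v := n))"
proof (induction n)
  case 0
  have "0(v := 0) = (0 :: 'v \<Rightarrow> nat)" by (simp add: fun_eq_iff)
  then show ?case by (simp only: power_0 monom_0)
next
  case (Suc n)
  have "var v ^ Suc n = monom (0(v := 1)) * (monom (0(v := n)) :: ('v, 'k) mpoly)"
    by (metis power_Suc Suc.IH var_eq_monom)
  also have "\<dots> = monom (0(v := 1) + 0(v := n))"
    by (rule monom_add[symmetric])
  also have "0(v := 1) + 0(v := n) = (0(v := Suc n) :: 'v \<Rightarrow> nat)"
    by (simp add: fun_eq_iff)
  finally show ?case .
qed

lemma max_ideal_mem_iff: "f \<in> max_ideal \<longleftrightarrow> Poly_Mapping.lookup f 0 = 0"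
proof -
  have "range var = monom ` range (\<lambda>v. 0(v := 1))"
    by (auto simp: var_eq_monom)
  then have max_eq: "max_ideal = supported_above (range (\<lambda>v. 0(v := 1)))"
    unfolding max_ideal_def by (metis ideal_span_monom_image)
  have key: "(\<exists>e\<in>range (\<lambda>v. 0(v := 1)). e \<le> a) \<longleftrightarrow> a \<noteq> 0" for a :: "'v \<Rightarrow> nat"
  proof
    assume "\<exists>e\<in>range (\<lambda>v. 0(v := 1)). e \<le> a"
    then obtain v where "0(v := 1) \<le> a" by blast
    from le_funD[OF this, of v] show "a \<noteq> 0" by auto
  next
    assume "a \<noteq> 0"
    then obtain v where "a v \<noteq> 0" by (auto simp: fun_eq_iff)
    then have "0(v := 1) \<le> a" by (auto simp: le_fun_def)
    then show "\<exists>e\<in>range (\<lambda>v. 0(v := 1)). e \<le> a" by blast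
  qed
  have "f \<in> max_ideal \<longleftrightarrow> (\<forall>a\<in>Poly_Mapping.keys f. a \<noteq> 0)"
    unfolding max_eq supported_above_def mem_Collect_eq key ..
  then show ?thesis by (auto simp: in_keys_iff)
qed

lemma zero_eq_add_fun: "((0::'v \<Rightarrow> nat) = a + b) \<longleftrightarrow> a = 0 \<and> b = 0"
  by (auto simp: fun_eq_iff)

lemma lookup_mult_0:
  "Poly_Mapping.lookup (f * g) 0 = Poly_Mapping.lookup f 0 * Poly_Mapping.lookup (g :: ('v, 'k::comm_ring_1) mpoly) 0"
proof -
  have "(\<Sum>q. Poly_Mapping.lookup g q when (0::'v \<Rightarrow> nat) = l + q) = (Poly_Mapping.lookup g 0 when l = 0)" for l
    by (cases "l = 0") (auto simp: zero_eq_add_fun when_def)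
  then show ?thesis
    by (simp add: lookup_mult mult_when)
qed

lemma is_prime_ideal_max_ideal: "is_prime_ideal (max_ideal :: ('v, 'k::idom) mpoly set)"
  using is_ideal_ideal_span[of "range var"] unfolding max_ideal_def[symmetric] is_prime_ideal_def
  by (auto simp: max_ideal_mem_iff lookup_mult_0)

lemma m_primary_pure_power: "m_primary I \<Longrightarrow> \<exists>n. 0(v := n) \<in> expset I"
proof -
  assume "m_primary I"
  moreover have "var v \<in> max_ideal"
    unfolding max_ideal_def using ideal_span_superset by blast
  ultimately obtain n where "var v ^ n \<in> I"
    by (auto simp: m_primary_def radical_def)
  then show ?thesis by (auto simp: var_power expset_def)
qed

definition socle_exp :: "('v, 'k::comm_ring_1) mpoly set \<Rightarrow> ('v \<Rightarrow> nat) \<Rightarrow> bool" where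
  "socle_exp I b \<longleftrightarrow> b \<notin> expset I \<and> (\<forall>v. b + 0(v := 1) \<in> expset I)"

lemma colon_monom_socle_exp:
  assumes "monomial_ideal I" "socle_exp I b"
  shows "colon I (monom b) = max_ideal"
proof -
  have shifted: "b + a \<in> expset I \<longleftrightarrow> a \<noteq> 0" for a
  proof
    assume "b + a \<in> expset I"
    then show "a \<noteq> 0" using assms(2) by (auto simp: socle_exp_def)
  next
    assume "a \<noteq> 0"
    then obtain v where "a v \<noteq> 0" by (auto simp: fun_eq_iff)
    then have "b + 0(v := 1) \<le> b + a" by (auto simp: le_fun_def)
    moreover have "b + 0(v := 1) \<in> expset I" using assms(2) by (simp add: socle_exp_def)
    ultimately show "b + a \<in> expset I" using expset_upward_closed[OF assms(1)] by blast
  qed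
  have "g \<in> colon I (monom b) \<longleftrightarrow> g \<in> max_ideal" for g
  proof -
    have "g \<in> colon I (monom b) \<longleftrightarrow> Poly_Mapping.keys (monom b * g) \<subseteq> expset I"
      by (simp add: colon_def mult.commute monomial_ideal_mem_iff[OF assms(1)])
    also have "\<dots> \<longleftrightarrow> 0 \<notin> Poly_Mapping.keys g"
      using shifted by (auto simp: keys_monom_mult)
    also have "\<dots> \<longleftrightarrow> g \<in> max_ideal"
      by (simp add: max_ideal_mem_iff in_keys_iff)
    finally show ?thesis .
  qed
  then show ?thesis by blast
qed

lemma socle_exp_of_prime_colon:
  assumes "monomial_ideal I" "m_primary I" "homogeneous k f" "is_prime_ideal (colon I f)"
  shows "\<exists>b. socle_exp I b \<and> tdeg b = k"
proof -
  have var_mult: "var v * f \<in> I" for v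
  proof -
    obtain n where "0(v := n) \<in> expset I" using m_primary_pure_power[OF assms(2)] by blast
    then have "var v ^ n \<in> I" by (simp add: var_power expset_def)
    then have "f * var v ^ n \<in> I"
      using ideal_mult_mem assms(1) by (auto simp: monomial_ideal_def)
    then have "var v ^ n \<in> colon I f" by (simp add: colon_def mult.commute)
    then have "var v \<in> colon I f" by (rule prime_ideal_power_mem[OF assms(4)])
    then show ?thesis by (simp add: colon_def)
  qed
  have "f \<notin> I" using assms(4) by (auto simp: colon_def is_prime_ideal_def)
  then obtain a where a: "a \<in> Poly_Mapping.keys f" "a \<notin> expset I"
    using monomial_ideal_mem_iff[OF assms(1)] by blast
  have "a + 0(v := 1) \<in> expset I" for v
    using var_mult[of v] a(1)
    by (auto simp: monomial_ideal_mem_iff[OF assms(1)] var_eq_monom keys_monom_mult add.commute)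
  with a assms(3) show ?thesis by (auto simp: socle_exp_def homogeneous_def)
qed

lemma homogeneous_ass_colon_iff:
  fixes I :: "('v::finite, 'k::idom) mpoly set"
  assumes "monomial_ideal I" "m_primary I"
  shows "(\<exists>f P. homogeneous k f \<and> P \<in> Ass I \<and> colon I f = P) \<longleftrightarrow> (\<exists>b. socle_exp I b \<and> tdeg b = k)"
proof
  assume "\<exists>f P. homogeneous k f \<and> P \<in> Ass I \<and> colon I f = P"
  then obtain f where "homogeneous k f" "is_prime_ideal (colon I f)" by (auto simp: Ass_def)
  then show "\<exists>b. socle_exp I b \<and> tdeg b = k" using socle_exp_of_prime_colon[OF assms] by blast
next
  assume "\<exists>b. socle_exp I b \<and> tdeg b = k"
  then obtain b where b: "socle_exp I b" "tdeg b = k" by blast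
  have "homogeneous k (monom b :: ('v, 'k) mpoly)"
    using b(2) by (simp add: homogeneous_def monom_def)
  moreover have "colon I (monom b) \<in> Ass I"
    using colon_monom_socle_exp[OF assms(1) b(1)] is_prime_ideal_max_ideal by (auto simp: Ass_def)
  ultimately show "\<exists>f P. homogeneous k f \<and> P \<in> Ass I \<and> colon I f = P" by blast
qed

lemma tdeg_add: "tdeg (a + b) = tdeg a + tdeg b"
  by (simp add: tdeg_def sum.distrib)

lemma tdeg_unit: "tdeg ((0 :: 'v::finite \<Rightarrow> nat)(v := 1)) = 1"
  unfolding tdeg_def fun_upd_apply zero_fun_apply by simp

lemma tdeg_strict_mono:
  assumes "(a :: 'v::finite \<Rightarrow> nat) \<le> b" "a \<noteq> b"
  shows "tdeg a < tdeg b"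
proof -
  obtain v where "a v \<noteq> b v" using assms(2) by (auto simp: fun_eq_iff)
  then have "a v < b v" using le_funD[OF assms(1)] by (simp add: order_less_le)
  then show ?thesis
    unfolding tdeg_def using assms(1) by (intro sum_strict_mono_ex1) (auto simp: le_fun_def)
qed

lemma tdeg_bounded_outside_expset:
  fixes I :: "('v::finite, 'k::comm_ring_1) mpoly set"
  assumes "monomial_ideal I" "m_primary I"
  obtains N where "\<And>b. b \<notin> expset I \<Longrightarrow> tdeg b \<le> N"
proof -
  obtain n where n: "\<And>v. 0(v := n v) \<in> expset I"
    using m_primary_pure_power[OF assms(2)] by metis
  have "tdeg b \<le> (\<Sum>v\<in>UNIV. n v)" if b: "b \<notin> expset I" for b
  proof -
    have "b v \<le> n v" for v
    proof (rule ccontr)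
      assume "\<not> b v \<le> n v"
      then have "0(v := n v) \<le> b" by (auto simp: le_fun_def)
      then show False using expset_upward_closed[OF assms(1) n] b by blast
    qed
    then show ?thesis unfolding tdeg_def by (intro sum_mono)
  qed
  then show thesis using that by blast
qed

lemma finite_socle_degrees:
  fixes I :: "('v::finite, 'k::comm_ring_1) mpoly set"
  assumes "monomial_ideal I" "m_primary I"
  shows "finite (tdeg ` Collect (socle_exp I))"
proof -
  obtain N where "\<And>b. b \<notin> expset I \<Longrightarrow> tdeg b \<le> N"
    using tdeg_bounded_outside_expset[OF assms] by blast
  then have "tdeg ` Collect (socle_exp I) \<subseteq> {..N}" by (auto simp: socle_exp_def)
  then show ?thesis using finite_subset by blast
qed

lemma socle_exp_exists:
  fixes I :: "('v::finite, 'k::comm_ring_1) mpoly set"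
  assumes "monomial_ideal I" "m_primary I"
  shows "\<exists>b. socle_exp I b"
proof -
  obtain N where N: "\<And>b. b \<notin> expset I \<Longrightarrow> tdeg b \<le> N"
    using tdeg_bounded_outside_expset[OF assms] by blast
  have "0 \<notin> expset I"
    using assms(2) by (simp add: expset_def monom_0 m_primary_def is_primary_ideal_def)
  then obtain b where b: "b \<notin> expset I" and b_max: "\<And>c. c \<notin> expset I \<Longrightarrow> tdeg c \<le> tdeg b"
    using ex_has_greatest_nat[of "\<lambda>b. b \<notin> expset I" 0 tdeg "Suc N"] N by (meson le_imp_less_Suc)
  have "b + 0(v := 1) \<in> expset I" for v
  proof (rule ccontr)
    assume "b + 0(v := 1) \<notin> expset I"
    then have "tdeg b + tdeg (0(v := 1)) \<le> tdeg b" using b_max tdeg_add by metis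
    then show False unfolding tdeg_unit by simp
  qed
  with b show ?thesis by (auto simp: socle_exp_def)
qed

lemma v_number_eq_Min_socle_degrees:
  fixes I :: "('v::finite, 'k::idom) mpoly set"
  assumes "monomial_ideal I" "m_primary I"
  shows "v_number I = Min (tdeg ` Collect (socle_exp I))"
proof -
  have "(\<exists>f P. homogeneous k f \<and> P \<in> Ass I \<and> colon I f = P) \<longleftrightarrow> k \<in> tdeg ` Collect (socle_exp I)" for k
    unfolding homogeneous_ass_colon_iff[OF assms] by blast
  then have "v_number I = (LEAST k. k \<in> tdeg ` Collect (socle_exp I))"
    by (simp add: v_number_def)
  also have "\<dots> = Min (tdeg ` Collect (socle_exp I))"
    using Least_Min[of "\<lambda>k. k \<in> tdeg ` Collect (socle_exp I)"]
      finite_socle_degrees[OF assms] socle_exp_exists[OF assms] by auto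
  finally show ?thesis .
qed

lemma mingens_below:
  fixes I :: "('v::finite, 'k::comm_ring_1) mpoly set"
  assumes "a \<in> expset I"
  shows "\<exists>g\<in>mingens I. g \<le> a"
proof -
  obtain g where g: "g \<in> expset I" "g \<le> a"
    and g_min: "\<And>c. c \<in> expset I \<Longrightarrow> c \<le> a \<Longrightarrow> tdeg g \<le> tdeg c"
    using ex_has_least_nat[of "\<lambda>g. g \<in> expset I \<and> g \<le> a" a tdeg] assms by blast
  have "c = g" if "c \<in> expset I" "c \<le> g" for c
    using g_min[of c] tdeg_strict_mono[of c g] that g(2) order_trans by fastforce
  then have "g \<in> mingens I"
    using g(1) by (auto simp: mingens_def le_fun_def)
  with g(2) show ?thesis by blast
qed

lemma matset_diag_socle_exp:
  fixes I :: "('v::finite, 'k::comm_ring_1) mpoly set"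
  assumes "monomial_ideal I" "A \<in> matset I"
  shows "socle_exp I (\<lambda>i. A i i - 1)" and "trace A = tdeg (\<lambda>i. A i i - 1) + card (UNIV :: 'v set)"
proof -
  define b where "b = (\<lambda>i. A i i - 1)"
  have row: "A i \<in> expset I" for i
    using assms(2) by (simp add: matset_def mingens_def)
  have b: "b \<notin> expset I"
    using assms(2) by (simp add: matset_def b_def)
  have off_diag: "A i l \<le> b l" if "l \<noteq> i" for i l
  proof -
    have "A i l < A l l" using assms(2) that by (auto simp: matset_def)
    then show ?thesis by (simp add: b_def)
  qed
  have diag: "A i i = b i + 1" for i
  proof -
    have "A i i \<noteq> 0"
    proof
      assume "A i i = 0"
      then have "A i \<le> b" using off_diag[of _ i] by (metis le_funI zero_le)
      then show False using expset_upward_closed[OF assms(1) row] b by blast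
    qed
    then show ?thesis by (simp add: b_def)
  qed
  have "A v \<le> b + 0(v := 1)" for v
    using off_diag[of _ v] diag[of v] by (auto simp: le_fun_def)
  then have "b + 0(v := 1) \<in> expset I" for v
    using expset_upward_closed[OF assms(1) row] by blast
  with b show "socle_exp I (\<lambda>i. A i i - 1)"
    by (simp add: socle_exp_def b_def)
  show "trace A = tdeg (\<lambda>i. A i i - 1) + card (UNIV :: 'v set)"
    unfolding trace_def tdeg_def b_def[symmetric] diag by (simp add: sum_Suc)
qed

lemma matset_of_socle_exp:
  fixes I :: "('v::finite, 'k::comm_ring_1) mpoly set"
  assumes "monomial_ideal I" "socle_exp I b"
  obtains A where "A \<in> matset I" "(\<lambda>i. A i i - 1) = b"
proof -
  have "\<forall>v. \<exists>g. g \<in> mingens I \<and> g \<le> b + 0(v := 1)"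
    using mingens_below assms(2) unfolding socle_exp_def by blast
  then obtain A where row: "\<And>v. A v \<in> mingens I" and below: "\<And>v. A v \<le> b + 0(v := 1)"
    by metis
  have off_diag: "A v l \<le> b l" if "l \<noteq> v" for v l
    using le_funD[OF below[of v], of l] that by simp
  have diag: "A v v = b v + 1" for v
  proof (rule ccontr)
    assume "A v v \<noteq> b v + 1"
    then have "A v v \<le> b v" using le_funD[OF below[of v], of v] by simp
    then have "A v \<le> b" using off_diag[of _ v] by (metis le_funI)
    then have "b \<in> expset I"
      using expset_upward_closed[OF assms(1)] row[of v] by (auto simp: mingens_def)
    then show False using assms(2) by (simp add: socle_exp_def)
  qed
  have "A \<in> matset I"
    unfolding matset_def
  proof (intro CollectI conjI allI impI)
    show "A i \<in> mingens I" for i by (rule row)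
    show "A l i < A i i" if "l \<noteq> i" for i l
      using off_diag[of i l] diag[of i] that by simp
    show "(\<lambda>i. A i i - 1) \<notin> expset I"
      using assms(2) by (simp add: diag socle_exp_def)
  qed
  moreover have "(\<lambda>i. A i i - 1) = b" by (simp add: diag)
  ultimately show thesis by (rule that)
qed

lemma matset_trace_image:
  fixes I :: "('v::finite, 'k::comm_ring_1) mpoly set"
  assumes "monomial_ideal I"
  shows "{int (trace A) - int (card (UNIV :: 'v set)) | A. A \<in> matset I} = int ` tdeg ` Collect (socle_exp I)"
proof (intro equalityI subsetI)
  fix x assume "x \<in> {int (trace A) - int (card (UNIV :: 'v set)) | A. A \<in> matset I}"
  then obtain A where "A \<in> matset I" "x = int (trace A) - int (card (UNIV :: 'v set))" by blast
  then show "x \<in> int ` tdeg ` Collect (socle_exp I)"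
    using matset_diag_socle_exp[OF assms] by auto
next
  fix x assume "x \<in> int ` tdeg ` Collect (socle_exp I)"
  then obtain b where b: "socle_exp I b" "x = int (tdeg b)" by blast
  then obtain A where "A \<in> matset I" "(\<lambda>i. A i i - 1) = b"
    using matset_of_socle_exp[OF assms] by blast
  then show "x \<in> {int (trace A) - int (card (UNIV :: 'v set)) | A. A \<in> matset I}"
    using matset_diag_socle_exp(2)[OF assms] b(2) by force
qed

theorem theorem4p1:
  fixes I :: "('v::finite, 'k::field) mpoly set"
  assumes "monomial_ideal I"
    and "m_primary I"
  shows "int (v_number I) = Min {int (trace A) - int (card (UNIV :: 'v set)) | A. A \<in> matset I}"
proof -
  let ?degrees = "tdeg ` Collect (socle_exp I)"
  have "int (v_number I) = int (Min ?degrees)"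
    using v_number_eq_Min_socle_degrees[OF assms] by simp
  also have "\<dots> = Min (int ` ?degrees)"
    using finite_socle_degrees[OF assms] socle_exp_exists[OF assms]
    by (intro mono_Min_commute) (auto simp: mono_def)
  also have "\<dots> = Min {int (trace A) - int (card (UNIV :: 'v set)) | A. A \<in> matset I}"
    by (simp only: matset_trace_image[OF assms(1)])
  finally show ?thesis .
qed

end
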